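(* Let $E$ be an ellipse with center $O$ and $\psi$ the elliptic inversion with respect to $E$. Let $P,T$ be distinct points different from $O$, let $P'=\psi(P)$, $T'=\psi(T)$, and let $w=w_P$, $u=w_T$. Then: (i) if $P,T,O$ are not collinear, $$P'T'=\frac{\sqrt{(w^2-u^2)\left(w^2(OT)^2-u^2(OP)^2\right)+w^2u^2(PT)^2}}{OP\cdot OT};$$ (ii) if $P,T,O$ are collinear, then $w=u$ and $$P'T'=\frac{w^2\,PT}{OP\cdot OT}.$$
   Context: Let $E$ be an ellipse in $\mathbb{R}^2$ with center $O$. For a point $P\neq O$, let $Q_P$ be the intersection point of the ray $\overrightarrow{OP}$ with $E$ and write $w_P=OQ_P$. The elliptic inversion is the map $\psi:\mathbb{R}^2\setminus\{O\}\to\mathbb{R}^2\setminus\{O\}$, $\psi(P)=P'$, where $P'$ is the unique point on the ray $\overrightarrow{OP}$ with $OP\cdot OP'=w_P^2$. $XY$ denotes the Euclidean distance between points $X$ and $Y$. *)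

theory Defs
  imports "HOL-Analysis.Analysis"
begin

definition ellipse :: "real^2 \<Rightarrow> real^2 \<Rightarrow> real^2 \<Rightarrow> real \<Rightarrow> real \<Rightarrow> (real^2) set" where
  "ellipse C e1 e2 a b =
     {X. ((X - C) \<bullet> e1)^2 / a^2 + ((X - C) \<bullet> e2)^2 / b^2 = 1}"

definition is_ellipse :: "(real^2) set \<Rightarrow> real^2 \<Rightarrow> bool" where
  "is_ellipse E C \<longleftrightarrow> (\<exists>e1 e2 a b. norm e1 = 1 \<and> norm e2 = 1 \<and> e1 \<bullet> e2 = 0
      \<and> a > 0 \<and> b > 0 \<and> E = ellipse C e1 e2 a b)"

definition ray :: "real^2 \<Rightarrow> real^2 \<Rightarrow> (real^2) set" where
  "ray C P = {C + t *\<^sub>R (P - C) | t. t > 0}"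

definition ray_pt :: "(real^2) set \<Rightarrow> real^2 \<Rightarrow> real^2 \<Rightarrow> real^2" where
  "ray_pt E C P = (THE Q. Q \<in> E \<and> Q \<in> ray C P)"

definition wlen :: "(real^2) set \<Rightarrow> real^2 \<Rightarrow> real^2 \<Rightarrow> real" where
  "wlen E C P = dist C (ray_pt E C P)"

definition ell_inv :: "(real^2) set \<Rightarrow> real^2 \<Rightarrow> real^2 \<Rightarrow> real^2" where
  "ell_inv E C P = (THE P'. P' \<in> ray C P \<and> dist C P * dist C P' = (wlen E C P)^2)"

end

theory Submission
  imports Defs
begin

text \<open>On the ray from \<open>O\<close> through \<open>P\<close> the point \<open>X = O + t (P - O)\<close> satisfies
  \<open>q(X - O) = t\<^sup>2 q(P - O)\<close> for the quadratic form \<open>q\<close> of the ellipse, so \<open>w\<^sub>P = OP / \<surd>q(P - O)\<close> and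
  \<open>P' = O + (w\<^sub>P\<^sup>2 / OP\<^sup>2)(P - O)\<close>. Expanding \<open>|P' - T'|\<^sup>2\<close> and eliminating the inner product
  \<open>(P - O)\<bullet>(T - O)\<close> with the law of cosines gives (i). On a line through \<open>O\<close> the form \<open>q\<close> scales by
  \<open>k\<^sup>2\<close> and the distance by \<open>|k|\<close>, so \<open>w\<^sub>P = w\<^sub>T\<close>; then the radicand in (i) is the perfect square
  \<open>(w\<^sup>2 PT)\<^sup>2\<close>, which gives (ii).\<close>

lemma orthonormal_pair_span_UNIV:
  fixes e1 e2 :: "'a::euclidean_space"
  assumes "DIM('a) = 2" "norm e1 = 1" "norm e2 = 1" "orthogonal e1 e2"
  shows "span {e1, e2} = UNIV"
proof -
  have "e1 \<noteq> e2" using assms by (metis orthogonal_self norm_zero zero_neq_one)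
  have "independent {e1, e2}"
    using assms by (intro pairwise_orthogonal_independent) (auto simp: pairwise_insert orthogonal_commute)
  then have "dim (span {e1, e2}) = DIM('a)"
    using indep_card_eq_dim_span \<open>e1 \<noteq> e2\<close> assms(1) by fastforce
  then show ?thesis by (simp add: dim_eq_full)
qed

lemma orthogonal_orthonormal_pair_eq_0:
  fixes e1 e2 v :: "'a::euclidean_space"
  assumes "DIM('a) = 2" "norm e1 = 1" "norm e2 = 1" "orthogonal e1 e2"
    and "orthogonal v e1" "orthogonal v e2"
  shows "v = 0"
  using orthogonal_to_span[of v "{e1, e2}" v] orthonormal_pair_span_UNIV[OF assms(1-4)] assms(5,6)
  by (auto simp: orthogonal_self)

definition ellipse_form :: "'a::real_inner \<Rightarrow> 'a \<Rightarrow> real \<Rightarrow> real \<Rightarrow> 'a \<Rightarrow> real" where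
  "ellipse_form e1 e2 a b v = (v \<bullet> e1)^2 / a^2 + (v \<bullet> e2)^2 / b^2"

lemma mem_ellipse_iff: "X \<in> ellipse C e1 e2 a b \<longleftrightarrow> ellipse_form e1 e2 a b (X - C) = 1"
  by (simp add: ellipse_def ellipse_form_def)

lemma ellipse_form_scaleR: "ellipse_form e1 e2 a b (k *\<^sub>R v) = k^2 * ellipse_form e1 e2 a b v"
  by (simp add: ellipse_form_def power_mult_distrib distrib_left)

lemma ellipse_form_pos:
  fixes e1 e2 v :: "'a::euclidean_space"
  assumes "DIM('a) = 2" "norm e1 = 1" "norm e2 = 1" "orthogonal e1 e2"
    and "a \<noteq> 0" "b \<noteq> 0" "v \<noteq> 0"
  shows "ellipse_form e1 e2 a b v > 0"
proof -
  have "v \<bullet> e1 \<noteq> 0 \<or> v \<bullet> e2 \<noteq> 0"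
    using orthogonal_orthonormal_pair_eq_0[OF assms(1-4)] assms(7) by (auto simp: orthogonal_def)
  then show ?thesis
    using assms(5,6) by (auto simp: ellipse_form_def intro: add_pos_nonneg add_nonneg_pos)
qed

lemma ray_pt_ellipse:
  assumes q: "ellipse_form e1 e2 a b (P - C) > 0"
  shows "ray_pt (ellipse C e1 e2 a b) C P
           = C + (1 / sqrt (ellipse_form e1 e2 a b (P - C))) *\<^sub>R (P - C)"
  unfolding ray_pt_def
proof (rule the_equality)
  let ?q = "ellipse_form e1 e2 a b (P - C)"
  have "ellipse_form e1 e2 a b ((1 / sqrt ?q) *\<^sub>R (P - C)) = 1"
    using q by (simp add: ellipse_form_scaleR power_divide)
  then show "C + (1 / sqrt ?q) *\<^sub>R (P - C) \<in> ellipse C e1 e2 a b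
           \<and> C + (1 / sqrt ?q) *\<^sub>R (P - C) \<in> ray C P"
    using q by (auto simp: mem_ellipse_iff ray_def)
next
  fix Q assume "Q \<in> ellipse C e1 e2 a b \<and> Q \<in> ray C P"
  then obtain t where t: "t > 0" "Q = C + t *\<^sub>R (P - C)" and "Q \<in> ellipse C e1 e2 a b"
    by (auto simp: ray_def)
  then have "t^2 * ellipse_form e1 e2 a b (P - C) = 1"
    by (simp add: mem_ellipse_iff ellipse_form_scaleR)
  then have "t^2 = (1 / sqrt (ellipse_form e1 e2 a b (P - C)))^2"
    using q by (simp add: field_simps)
  then have "t = 1 / sqrt (ellipse_form e1 e2 a b (P - C))"
    using t(1) q by simp
  then show "Q = C + (1 / sqrt (ellipse_form e1 e2 a b (P - C))) *\<^sub>R (P - C)"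
    using t(2) by simp
qed

lemma wlen_ellipse:
  assumes "ellipse_form e1 e2 a b (P - C) > 0"
  shows "wlen (ellipse C e1 e2 a b) C P = norm (P - C) / sqrt (ellipse_form e1 e2 a b (P - C))"
  using assms by (simp add: wlen_def ray_pt_ellipse[OF assms] dist_norm)

lemma wlen_ellipse_scaleR:
  assumes "ellipse_form e1 e2 a b (P - C) > 0" "k \<noteq> 0"
  shows "wlen (ellipse C e1 e2 a b) C (C + k *\<^sub>R (P - C)) = wlen (ellipse C e1 e2 a b) C P"
proof -
  have "ellipse_form e1 e2 a b (k *\<^sub>R (P - C)) > 0"
    using assms by (simp add: ellipse_form_scaleR)
  then show ?thesis
    using assms by (simp add: wlen_ellipse ellipse_form_scaleR real_sqrt_mult)
qed

lemma ell_inv_eq: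
  assumes "P \<noteq> C" "wlen E C P \<noteq> 0"
  shows "ell_inv E C P = C + ((wlen E C P)^2 / (norm (P - C))^2) *\<^sub>R (P - C)"
  unfolding ell_inv_def
proof (rule the_equality)
  have "dist C (C + ((wlen E C P)^2 / (norm (P - C))^2) *\<^sub>R (P - C)) = (wlen E C P)^2 / norm (P - C)"
    using assms(1) by (simp add: dist_norm power2_eq_square)
  then show "C + ((wlen E C P)^2 / (norm (P - C))^2) *\<^sub>R (P - C) \<in> ray C P
      \<and> dist C P * dist C (C + ((wlen E C P)^2 / (norm (P - C))^2) *\<^sub>R (P - C)) = (wlen E C P)^2"
    using assms by (auto simp: ray_def dist_norm norm_minus_commute)
next
  fix Q assume "Q \<in> ray C P \<and> dist C P * dist C Q = (wlen E C P)^2"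
  then obtain t where t: "t > 0" "Q = C + t *\<^sub>R (P - C)"
    and h: "dist C P * dist C Q = (wlen E C P)^2" by (auto simp: ray_def)
  have "dist C P * dist C Q = t * (norm (P - C))^2"
    using t by (simp add: dist_norm norm_minus_commute power2_eq_square)
  then have "t = (wlen E C P)^2 / (norm (P - C))^2"
    using h assms(1) by (simp add: field_simps)
  then show "Q = C + ((wlen E C P)^2 / (norm (P - C))^2) *\<^sub>R (P - C)"
    using t(2) by simp
qed

lemma inversion_dist:
  fixes p t :: "'a::real_inner"
  assumes "p \<noteq> 0" "t \<noteq> 0"
  shows "norm ((w^2 / (norm p)^2) *\<^sub>R p - (u^2 / (norm t)^2) *\<^sub>R t) =
    sqrt ((w^2 - u^2) * (w^2 * (norm t)^2 - u^2 * (norm p)^2) + w^2 * u^2 * (norm (p - t))^2)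
      / (norm p * norm t)"
proof -
  define L where "L = norm ((w^2 / (norm p)^2) *\<^sub>R p - (u^2 / (norm t)^2) *\<^sub>R t)"
  have np: "norm p > 0" and nt: "norm t > 0" using assms by auto
  have L2: "L^2 = (w^2 / (norm p)^2)^2 * (norm p)^2 + (u^2 / (norm t)^2)^2 * (norm t)^2
       - 2 * (w^2 / (norm p)^2) * (u^2 / (norm t)^2) * (p \<bullet> t)"
    unfolding L_def power2_norm_eq_inner
    by (simp add: inner_commute power2_eq_square algebra_simps)
  have law_of_cosines: "(norm (p - t))^2 = (norm p)^2 + (norm t)^2 - 2 * (p \<bullet> t)"
    unfolding power2_norm_eq_inner by (simp add: inner_diff_left inner_diff_right inner_commute)
  have "(L * (norm p * norm t))^2
      = (w^2 - u^2) * (w^2 * (norm t)^2 - u^2 * (norm p)^2) + w^2 * u^2 * (norm (p - t))^2"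
    unfolding power_mult_distrib L2 law_of_cosines using np nt by (simp add: field_simps power2_eq_square)
  then have "L * (norm p * norm t)
      = sqrt ((w^2 - u^2) * (w^2 * (norm t)^2 - u^2 * (norm p)^2) + w^2 * u^2 * (norm (p - t))^2)"
    by (metis L_def mult_nonneg_nonneg norm_ge_zero real_sqrt_abs abs_of_nonneg)
  then show ?thesis using np nt unfolding L_def by (simp add: field_simps)
qed

lemma inversion_dist_same_radius:
  fixes p t :: "'a::real_inner"
  assumes "p \<noteq> 0" "t \<noteq> 0"
  shows "norm ((w^2 / (norm p)^2) *\<^sub>R p - (w^2 / (norm t)^2) *\<^sub>R t)
           = w^2 * norm (p - t) / (norm p * norm t)"
proof -
  have "(w^2 - w^2) * (w^2 * (norm t)^2 - w^2 * (norm p)^2) + w^2 * w^2 * (norm (p - t))^2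
      = (w^2 * norm (p - t))^2"
    by (simp add: power2_eq_square)
  then have "sqrt ((w^2 - w^2) * (w^2 * (norm t)^2 - w^2 * (norm p)^2) + w^2 * w^2 * (norm (p - t))^2)
      = w^2 * norm (p - t)"
    by simp
  then show ?thesis using inversion_dist[OF assms, of w w] by simp
qed

lemma collinear_obtain_scaleR:
  fixes P T C :: "'a::real_vector"
  assumes "collinear {P, T, C}" "P \<noteq> C"
  obtains k where "T = C + k *\<^sub>R (P - C)"
proof -
  obtain u where "T = u *\<^sub>R P + (1 - u) *\<^sub>R C"
    using assms unfolding collinear_3_expand by blast
  then show ?thesis using that[of u] by (simp add: algebra_simps)
qed

theorem theorem1:
  fixes E :: "(real^2) set" and C P T :: "real^2"
  assumes "is_ellipse E C"
    and "P \<noteq> C" and "T \<noteq> C" and "P \<noteq> T"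
  shows "(\<not> collinear {P, T, C} \<longrightarrow>
            dist (ell_inv E C P) (ell_inv E C T) =
              sqrt (((wlen E C P)^2 - (wlen E C T)^2)
                      * ((wlen E C P)^2 * (dist C T)^2 - (wlen E C T)^2 * (dist C P)^2)
                    + (wlen E C P)^2 * (wlen E C T)^2 * (dist P T)^2)
              / (dist C P * dist C T))
       \<and> (collinear {P, T, C} \<longrightarrow>
            wlen E C P = wlen E C T \<and>
            dist (ell_inv E C P) (ell_inv E C T) =
              (wlen E C P)^2 * dist P T / (dist C P * dist C T))"
proof -
  obtain e1 e2 a b where frame: "norm e1 = 1" "norm e2 = 1" "e1 \<bullet> e2 = 0" "a > 0" "b > 0"
    and E: "E = ellipse C e1 e2 a b"
    using assms(1) unfolding is_ellipse_def by blast
  have q_pos: "ellipse_form e1 e2 a b (X - C) > 0" if "X \<noteq> C" for X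
    using ellipse_form_pos[of e1 e2 a b "X - C"] frame that by (simp add: orthogonal_def)
  have w_pos: "wlen E C X \<noteq> 0" if "X \<noteq> C" for X
    using q_pos[OF that] that unfolding E wlen_ellipse[OF q_pos[OF that]] by simp
  define w u where "w = wlen E C P" and "u = wlen E C T"
  have dist_inv: "dist (ell_inv E C P) (ell_inv E C T)
      = norm ((w^2 / (norm (P - C))^2) *\<^sub>R (P - C) - (u^2 / (norm (T - C))^2) *\<^sub>R (T - C))"
    unfolding w_def u_def ell_inv_eq[OF assms(2) w_pos[OF assms(2)]]
      ell_inv_eq[OF assms(3) w_pos[OF assms(3)]] dist_norm by simp
  have "P - C \<noteq> 0" "T - C \<noteq> 0" using assms(2,3) by simp_all
  note inversion = inversion_dist[OF this] inversion_dist_same_radius[OF this]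
  have w_eq: "w = u" if col: "collinear {P, T, C}"
  proof -
    obtain k where k: "T = C + k *\<^sub>R (P - C)"
      using collinear_obtain_scaleR[OF col assms(2)] .
    then have "k \<noteq> 0" using assms(3) by auto
    then show ?thesis
      unfolding w_def u_def E k using wlen_ellipse_scaleR[OF q_pos[OF assms(2)]] by simp
  qed
  have dists: "dist C P = norm (P - C)" "dist C T = norm (T - C)" "dist P T = norm ((P - C) - (T - C))"
    by (simp_all add: dist_norm norm_minus_commute)
  show ?thesis
  proof (cases "collinear {P, T, C}")
    case True
    then show ?thesis
      using w_eq unfolding w_def[symmetric] u_def[symmetric] dist_inv dists by (simp add: inversion(2))
  next
    case False
    then show ?thesis
      unfolding w_def[symmetric] u_def[symmetric] dist_inv dists inversion(1) by simp
  qed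
qed

end
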